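(* Let $n \geq 1$ and $g \in G_n$, and for $\alpha$ coprime to $\mathrm{ord}(g)$ let $S_{g,\alpha} = \{h \in G_n : hgh^{-1} = g^{\alpha}\}$. (i) If $q_n(g) = 0$ and $g \ne \mathrm{id}$, then $\mathrm{ord}(g)=3$ and $S_{g,\alpha} = G_n$ if $\alpha \equiv 1 \bmod 3$, $S_{g,\alpha}=\varnothing$ otherwise. (ii) If $q_n(g) \neq 0$, then $S_{g,\alpha} = \varnothing$ unless $\alpha \equiv 1 \bmod \mathrm{ord}(g)$, and the centralizer $S_{g,1}$ of $g$ has size $3\cdot 9^n$ if $\pi_0(q_n(g)) \neq 0$; size $27^n$ if $\pi_0(q_n(g)) = 0$ and $\pi_i(q_n(g)) \neq 0$ for some $1\le i\le n$; and size $3 \cdot 27^n$ if $\pi_0(q_n(g)) = 0$ and $\pi_i(q_n(g)) = 0$ for all $1 \le i \le n$.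
   Context: Let $A_n = \mathbb{Z}/3\mathbb{Z} \oplus (\mathbb{Z}/9\mathbb{Z})^n$, $\pi_0: A_n \to \mathbb{Z}/3\mathbb{Z}$ the projection onto the first factor, and for $1\le i\le n$, $\pi_i: A_n \to \mathbb{Z}/3\mathbb{Z}$ the projection onto the $i$-th copy of $\mathbb{Z}/9\mathbb{Z}$ followed by reduction mod $3$. Let $\theta(a,b) = (\pi_0(a)\pi_i(b))_{1\le i\le n}$. $G_n$ is the set $(\mathbb{Z}/3\mathbb{Z})^n \times A_n$ with multiplication $(c_1,a_1)(c_2,a_2) = (c_1+c_2+\theta(a_1,a_2), a_1+a_2)$, and $q_n: G_n \to A_n$ is the projection to the second coordinate. *)

theory Defs
  imports "HOL-Algebra.Algebra"
begin

text \<open>An element is a triple (c, a0, a):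
  c :: nat => int encodes the (Z/3Z)^n coordinate (entries c i in {0,1,2} for 1 <= i <= n, 0 elsewhere);
  (a0, a) encodes the element of A_n = Z/3Z + (Z/9Z)^n, with a0 in {0,1,2} and
  a i in {0..8} for 1 <= i <= n, 0 elsewhere.\<close>

type_synonym gelem = "(nat \<Rightarrow> int) \<times> int \<times> (nat \<Rightarrow> int)"

definition An_carrier :: "nat \<Rightarrow> (int \<times> (nat \<Rightarrow> int)) set" where
  "An_carrier n = {(a0, a). a0 \<in> {0..2} \<and>
      (\<forall>i. a i \<in> (if i \<in> {1..n} then {0..8} else {0}))}"

definition An_add :: "nat \<Rightarrow> int \<times> (nat \<Rightarrow> int) \<Rightarrow> int \<times> (nat \<Rightarrow> int) \<Rightarrow> int \<times> (nat \<Rightarrow> int)" where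
  "An_add n x y = ((fst x + fst y) mod 3,
      (\<lambda>i. if i \<in> {1..n} then (snd x i + snd y i) mod 9 else 0))"

definition pi0 :: "int \<times> (nat \<Rightarrow> int) \<Rightarrow> int" where
  "pi0 x = fst x mod 3"

definition pii :: "nat \<Rightarrow> int \<times> (nat \<Rightarrow> int) \<Rightarrow> int" where
  "pii i x = snd x i mod 3"

definition theta :: "nat \<Rightarrow> int \<times> (nat \<Rightarrow> int) \<Rightarrow> int \<times> (nat \<Rightarrow> int) \<Rightarrow> (nat \<Rightarrow> int)" where
  "theta n x y = (\<lambda>i. if i \<in> {1..n} then (pi0 x * pii i y) mod 3 else 0)"

definition Gn :: "nat \<Rightarrow> gelem monoid" where
  "Gn n = \<lparr> carrier = {(c, a). (\<forall>i. c i \<in> (if i \<in> {1..n} then {0..2} else {0})) \<and> a \<in> An_carrier n},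
           monoid.mult = (\<lambda>(c1, a1) (c2, a2).
                    ((\<lambda>i. if i \<in> {1..n} then (c1 i + c2 i + theta n a1 a2 i) mod 3 else 0),
                     An_add n a1 a2)),
           monoid.one = ((\<lambda>_. 0), 0, (\<lambda>_. 0)) \<rparr>"

definition qn :: "gelem \<Rightarrow> int \<times> (nat \<Rightarrow> int)" where
  "qn g = snd g"

definition An_zero :: "int \<times> (nat \<Rightarrow> int)" where
  "An_zero = (0, (\<lambda>_. 0))"

definition Sset :: "nat \<Rightarrow> gelem \<Rightarrow> int \<Rightarrow> gelem set" where
  "Sset n g \<alpha> = {h \<in> carrier (Gn n).
      h \<otimes>\<^bsub>Gn n\<^esub> g \<otimes>\<^bsub>Gn n\<^esub> inv\<^bsub>Gn n\<^esub> h = g [^]\<^bsub>Gn n\<^esub> \<alpha>}"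

end

theory Submission
  imports Defs "HOL-Computational_Algebra.Primes"
begin

text \<open>The projection \<open>q\<^sub>n\<close> is a homomorphism onto the abelian group \<open>A\<^sub>n\<close>, so it is invariant
  under conjugation, and two elements commute iff \<open>\<theta>\<close> is symmetric on their images.
  If \<open>q\<^sub>n g = 0\<close>, then \<open>g\<close> is central with \<open>g\<^sup>3 = 1\<close>, so \<open>h g h\<^sup>-\<^sup>1 = g\<^sup>\<alpha>\<close> holds for all \<open>h\<close> or for none.
  If \<open>q\<^sub>n g \<noteq> 0\<close>, then \<open>q\<^sub>n\<close> is injective on the cyclic group generated by \<open>g\<close>, so
  \<open>q\<^sub>n (g\<^sup>\<alpha>) = q\<^sub>n g\<close> forces \<open>\<alpha> \<equiv> 1\<close> modulo the order of \<open>g\<close>. The centralizer of \<open>g\<close> is \<open>(\<int>/3)\<^sup>n\<close> times the set of \<open>y \<in> A\<^sub>n\<close> with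
  \<open>\<theta>(y, q\<^sub>n g) = \<theta>(q\<^sub>n g, y)\<close>, a system of congruences mod 3 that is counted coordinatewise.\<close>

lemma mod_add_mod_add_mod: "(x mod m + y + z mod m) mod m = (x + y + z) mod (m::int)"
proof -
  have "x mod m + y + z mod m = x + y + z + (- (x div m) - z div m) * m"
    by (simp flip: minus_mult_div_eq_mod add: algebra_simps)
  then show ?thesis by (simp only: mod_mult_self1)
qed

lemma mod_add_left_cancel: "(s + t) mod m = (s + u) mod m \<longleftrightarrow> t mod m = u mod (m::int)"
  by (simp add: mod_eq_dvd_iff)

lemma mult_mod_mod_cancel: "(m::int) dvd k \<Longrightarrow> (a * (b mod k)) mod m = (a * b) mod m"
  by (metis mod_mod_cancel mod_mult_right_eq)

lemma mod_mult_eq_iff_of_square_one: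
  fixes m p u z :: int
  assumes "(u * u) mod m = 1 mod m"
  shows "p mod m = (u * z) mod m \<longleftrightarrow> z mod m = (p * u) mod m"
proof -
  have cancel: "(a * u * u) mod m = a mod m" for a
  proof -
    have "(a * u * u) mod m = (a * ((u * u) mod m)) mod m"
      by (simp add: mod_mult_right_eq mult.assoc)
    also have "\<dots> = (a * 1) mod m"
      by (simp only: assms mod_mult_right_eq)
    finally show ?thesis by simp
  qed
  show ?thesis
  proof
    assume "p mod m = (u * z) mod m"
    then have "(p * u) mod m = (z * u * u) mod m"
      using mod_mult_left_eq[of p m u] mod_mult_left_eq[of "u * z" m u] by (simp add: ac_simps)
    then show "z mod m = (p * u) mod m" using cancel[of z] by simp
  next
    assume "z mod m = (p * u) mod m"
    then have "(u * z) mod m = (p * u * u) mod m"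
      using mod_mult_right_eq[of u z m] mod_mult_right_eq[of u "p * u" m] by (simp add: ac_simps)
    then show "p mod m = (u * z) mod m" using cancel[of p] by simp
  qed
qed

lemma mult_succ_mod_eq_self_imp:
  assumes "((r + 1) * x) mod m = (x::int)"
  shows "(r * x) mod m = 0"
proof -
  have "((r + 1) * x) mod m = x mod m"
    using assms by (metis mod_mod_trivial)
  then show ?thesis
    by (simp add: mod_eq_dvd_iff algebra_simps dvd_eq_mod_eq_0[symmetric])
qed

lemma card_residue_class:
  fixes m k r :: int
  assumes "0 \<le> r" "r < m" "0 \<le> k"
  shows "card {x \<in> {0..m * k - 1}. x mod m = r} = nat k"
proof -
  have "{x \<in> {0..m * k - 1}. x mod m = r} = (\<lambda>j. r + m * j) ` {0..<k}"
  proof (rule subset_antisym; rule subsetI)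
    fix x assume "x \<in> {x \<in> {0..m * k - 1}. x mod m = r}"
    then have x: "0 \<le> x" "x < m * k" "x mod m = r" by auto
    then have x_eq: "x = r + m * (x div m)" using mod_mult_div_eq[of x m] by simp
    then have "m * (x div m) < m * k" using x assms(1) by linarith
    then have "x div m \<in> {0..<k}" using x assms by (simp add: pos_imp_zdiv_nonneg_iff)
    with x_eq show "x \<in> (\<lambda>j. r + m * j) ` {0..<k}" by blast
  next
    fix x assume "x \<in> (\<lambda>j. r + m * j) ` {0..<k}"
    then obtain j where j: "0 \<le> j" "j < k" "x = r + m * j" by auto
    have "m * (j + 1) \<le> m * k" using j assms by (intro mult_left_mono) auto
    then show "x \<in> {x \<in> {0..m * k - 1}. x mod m = r}" using j assms by (simp add: algebra_simps)
  qed
  moreover have "inj_on (\<lambda>j. r + m * j) {0..<k}"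
    using assms by (auto simp: inj_on_def)
  ultimately show ?thesis by (simp add: card_image)
qed

definition Pi_zero :: "'a set \<Rightarrow> ('a \<Rightarrow> 'b set) \<Rightarrow> ('a \<Rightarrow> 'b::zero) set" where
  "Pi_zero I S = {f. (\<forall>i\<in>I. f i \<in> S i) \<and> (\<forall>i. i \<notin> I \<longrightarrow> f i = 0)}"

lemma Pi_zero_mem: "f \<in> Pi_zero I S \<Longrightarrow> i \<in> I \<Longrightarrow> f i \<in> S i"
  by (simp add: Pi_zero_def)

lemma Pi_zero_outside: "f \<in> Pi_zero I S \<Longrightarrow> i \<notin> I \<Longrightarrow> f i = 0"
  by (simp add: Pi_zero_def)

lemma Pi_zero_Collect: "Pi_zero I (\<lambda>i. {z \<in> S i. P i z}) = {f \<in> Pi_zero I S. \<forall>i\<in>I. P i (f i)}"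
  by (auto simp: Pi_zero_def)

lemma Pi_zero_mod:
  "0 < (m::int) \<Longrightarrow> (\<lambda>i. if i \<in> I then f i mod m else 0) \<in> Pi_zero I (\<lambda>_. {0..m - 1})"
  by (simp add: Pi_zero_def zle_diff1_eq)

lemma Pi_zero_mod_eq:
  assumes "f \<in> Pi_zero I (\<lambda>_. {0..m - 1})"
  shows "(\<lambda>i. if i \<in> I then f i mod m else 0) = (f :: _ \<Rightarrow> int)"
proof
  fix i show "(if i \<in> I then f i mod m else 0) = f i"
    using Pi_zero_mem[OF assms, of i] Pi_zero_outside[OF assms, of i] by (cases "i \<in> I") auto
qed

lemma bij_betw_restrict_Pi_zero: "bij_betw (\<lambda>f. restrict f I) (Pi_zero I S) (PiE I S)"
  by (rule bij_betw_byWitness[where f' = "\<lambda>g i. if i \<in> I then g i else 0"])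
    (auto simp: Pi_zero_def PiE_def extensional_def fun_eq_iff)

lemma card_Pi_zero: "finite I \<Longrightarrow> card (Pi_zero I S) = (\<Prod>i\<in>I. card (S i))"
  by (simp add: bij_betw_same_card[OF bij_betw_restrict_Pi_zero] card_PiE)

lemma finite_Pi_zero: "finite I \<Longrightarrow> (\<And>i. i \<in> I \<Longrightarrow> finite (S i)) \<Longrightarrow> finite (Pi_zero I S)"
  by (simp add: bij_betw_finite[OF bij_betw_restrict_Pi_zero] finite_PiE)

section \<open>The group \<open>G\<^sub>n\<close>\<close>

lemma An_carrier_Pi_zero: "An_carrier n = {0..2} \<times> Pi_zero {1..n} (\<lambda>_. {0..8})"
  by (auto simp: An_carrier_def Pi_zero_def)

lemma Gn_carrier_Pi_zero: "carrier (Gn n) = Pi_zero {1..n} (\<lambda>_. {0..2}) \<times> An_carrier n"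
  by (auto simp: Gn_def Pi_zero_def)

lemma Gn_mult: "(c, x) \<otimes>\<^bsub>Gn n\<^esub> (d, y) =
    ((\<lambda>i. if i \<in> {1..n} then (c i + d i + theta n x y i) mod 3 else 0), An_add n x y)"
  by (simp add: Gn_def)

lemma Gn_one: "\<one>\<^bsub>Gn n\<^esub> = ((\<lambda>_. 0), An_zero)"
  by (simp add: Gn_def An_zero_def)

lemma theta_eq: "i \<in> {1..n} \<Longrightarrow> theta n x y i = (fst x * snd y i) mod 3"
  by (simp add: theta_def pi0_def pii_def mod_mult_eq)

lemma theta_outside: "i \<notin> {1..n} \<Longrightarrow> theta n x y i = 0"
  unfolding theta_def by (simp only: if_not_P if_False)

lemma theta_eq_iff:
  "theta n x y = theta n u v \<longleftrightarrow> (\<forall>i\<in>{1..n}. theta n x y i = theta n u v i)"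
  unfolding fun_eq_iff by (metis theta_outside)

lemma theta_mod: "theta n x y i mod 3 = theta n x y i"
  by (simp add: theta_def)

lemma theta_An_add_left:
  "i \<in> {1..n} \<Longrightarrow> theta n (An_add n x y) z i = (theta n x z i + theta n y z i) mod 3"
  by (simp add: theta_eq An_add_def mod_simps algebra_simps)

lemma theta_An_add_right:
  "i \<in> {1..n} \<Longrightarrow> theta n x (An_add n y z) i = (theta n x y i + theta n x z i) mod 3"
  by (simp add: theta_eq An_add_def mod_simps mult_mod_mod_cancel algebra_simps)

lemma theta_An_zero_left: "theta n An_zero y = (\<lambda>_. 0)"
  by (simp add: theta_def An_zero_def pi0_def fun_eq_iff)

lemma theta_An_zero_right: "theta n x An_zero = (\<lambda>_. 0)"
  by (simp add: theta_def An_zero_def pii_def fun_eq_iff)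

lemma An_add_assoc: "An_add n (An_add n x y) z = An_add n x (An_add n y z)"
  by (simp add: An_add_def mod_simps add.assoc fun_eq_iff)

lemma An_add_commute: "An_add n x y = An_add n y x"
  by (simp add: An_add_def add.commute fun_eq_iff)

lemma An_add_zero_left:
  assumes "x \<in> An_carrier n"
  shows "An_add n An_zero x = x"
proof -
  obtain a0 a where x: "x = (a0, a)" and a0: "a0 \<in> {0..2}" and a: "a \<in> Pi_zero {1..n} (\<lambda>_. {0..8})"
    using assms by (auto simp: An_carrier_Pi_zero)
  have "(\<lambda>i. if i \<in> {1..n} then a i mod 9 else 0) = a"
    using a by (rule Pi_zero_mod_eq[of _ _ 9, simplified])
  moreover have "An_add n An_zero (a0, a) = (a0 mod 3, (\<lambda>i. if i \<in> {1..n} then a i mod 9 else 0))"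
    by (simp add: An_add_def An_zero_def fun_eq_iff)
  ultimately show ?thesis using a0 by (simp add: x)
qed

lemma An_add_closed: "An_add n x y \<in> An_carrier n"
  unfolding An_add_def An_carrier_Pi_zero mem_Times_iff fst_conv snd_conv
  by (intro conjI Pi_zero_mod[of 9, simplified]) simp

lemma Gn_assoc: "(x \<otimes>\<^bsub>Gn n\<^esub> y) \<otimes>\<^bsub>Gn n\<^esub> z = x \<otimes>\<^bsub>Gn n\<^esub> (y \<otimes>\<^bsub>Gn n\<^esub> z)"
proof -
  obtain c a d b e u where xyz: "x = (c, a)" "y = (d, b)" "z = (e, u)"
    by (cases x, cases y, cases z) blast
  have "(if i \<in> {1..n} then ((if i \<in> {1..n} then (c i + d i + theta n a b i) mod 3 else 0)
          + e i + theta n (An_add n a b) u i) mod 3 else 0) =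
        (if i \<in> {1..n} then (c i + (if i \<in> {1..n} then (d i + e i + theta n b u i) mod 3 else 0)
          + theta n a (An_add n b u) i) mod 3 else 0)" for i
  proof (cases "i \<in> {1..n}")
    case i: True
    have "((c i + d i + theta n a b i) mod 3 + e i + theta n (An_add n a b) u i) mod 3 =
        (c i + d i + theta n a b i + e i + (theta n a u i + theta n b u i)) mod 3"
      by (simp only: theta_An_add_left[OF i] mod_add_mod_add_mod)
    also have "\<dots> = (d i + e i + theta n b u i + c i + (theta n a b i + theta n a u i)) mod 3"
      by (simp only: add.assoc add.commute add.left_commute)
    also have "\<dots> = ((d i + e i + theta n b u i) mod 3 + c i + theta n a (An_add n b u) i) mod 3"
      by (simp only: theta_An_add_right[OF i] mod_add_mod_add_mod)
    finally show ?thesis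
      using i by (simp only: if_True add.commute[of "(d i + e i + theta n b u i) mod 3" "c i"])
  qed (simp only: if_False)
  then show ?thesis
    unfolding xyz Gn_mult An_add_assoc by simp
qed

lemma Gn_closed: "x \<otimes>\<^bsub>Gn n\<^esub> y \<in> carrier (Gn n)"
  unfolding Gn_carrier_Pi_zero mem_Times_iff
  by (cases x, cases y) (simp only: Gn_mult fst_conv snd_conv, intro conjI Pi_zero_mod[of 3, simplified] An_add_closed)

lemma Gn_one_closed: "\<one>\<^bsub>Gn n\<^esub> \<in> carrier (Gn n)"
  by (simp add: Gn_one Gn_carrier_Pi_zero Pi_zero_def An_zero_def An_carrier_Pi_zero)

lemma Gn_one_left:
  assumes "x \<in> carrier (Gn n)"
  shows "\<one>\<^bsub>Gn n\<^esub> \<otimes>\<^bsub>Gn n\<^esub> x = x"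
proof -
  obtain c a where x: "x = (c, a)" and c: "c \<in> Pi_zero {1..n} (\<lambda>_. {0..2})" and a: "a \<in> An_carrier n"
    using assms by (auto simp: Gn_carrier_Pi_zero)
  have "(\<lambda>i. if i \<in> {1..n} then c i mod 3 else 0) = c"
    using c by (rule Pi_zero_mod_eq[of _ _ 3, simplified])
  then show ?thesis
    by (simp add: x Gn_one Gn_mult theta_An_zero_left An_add_zero_left[OF a] cong: if_cong)
qed

lemma Gn_inv_left_exists: "\<exists>y \<in> carrier (Gn n). y \<otimes>\<^bsub>Gn n\<^esub> (c, a) = \<one>\<^bsub>Gn n\<^esub>"
proof -
  define b where "b = ((- fst a) mod 3, (\<lambda>i. if i \<in> {1..n} then (- snd a i) mod 9 else 0))"
  define d where "d = (\<lambda>i. if i \<in> {1..n} then (- c i - theta n b a i) mod 3 else 0)"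
  have "d \<in> Pi_zero {1..n} (\<lambda>_. {0..2})"
    unfolding d_def by (rule Pi_zero_mod[of 3, simplified])
  moreover have "b \<in> An_carrier n"
    unfolding b_def An_carrier_Pi_zero mem_Times_iff fst_conv snd_conv
    by (intro conjI Pi_zero_mod[of 9, simplified]) simp
  moreover have "An_add n b a = An_zero"
    by (simp add: b_def An_add_def An_zero_def mod_simps fun_eq_iff)
  moreover have "(\<lambda>i. if i \<in> {1..n} then (d i + c i + theta n b a i) mod 3 else 0) = (\<lambda>_. 0)"
  proof (rule ext)
    fix i
    show "(if i \<in> {1..n} then (d i + c i + theta n b a i) mod 3 else 0) = 0"
      using mod_add_mod_add_mod[of "- c i - theta n b a i" 3 "c i" "theta n b a i"]
      by (simp add: d_def theta_mod)
  qed
  ultimately show ?thesis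
    by (intro bexI[of _ "(d, b)"]) (simp_all add: Gn_mult Gn_one Gn_carrier_Pi_zero)
qed

lemma group_Gn: "group (Gn n)"
proof (rule groupI)
  show "x \<otimes>\<^bsub>Gn n\<^esub> y \<in> carrier (Gn n)" for x y
    by (rule Gn_closed)
  show "\<one>\<^bsub>Gn n\<^esub> \<in> carrier (Gn n)" by (rule Gn_one_closed)
  show "x \<otimes>\<^bsub>Gn n\<^esub> y \<otimes>\<^bsub>Gn n\<^esub> z = x \<otimes>\<^bsub>Gn n\<^esub> (y \<otimes>\<^bsub>Gn n\<^esub> z)" for x y z
    by (rule Gn_assoc)
  show "\<one>\<^bsub>Gn n\<^esub> \<otimes>\<^bsub>Gn n\<^esub> x = x" if "x \<in> carrier (Gn n)" for x
    using that by (rule Gn_one_left)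
  show "\<exists>y \<in> carrier (Gn n). y \<otimes>\<^bsub>Gn n\<^esub> x = \<one>\<^bsub>Gn n\<^esub>" for x
    using Gn_inv_left_exists[of n "fst x" "snd x"] by (simp only: prod.collapse)
qed

lemma finite_carrier_Gn: "finite (carrier (Gn n))"
  by (simp add: Gn_carrier_Pi_zero An_carrier_Pi_zero finite_Pi_zero)

section \<open>Powers and the projection \<open>q\<^sub>n\<close>\<close>

lemma qn_mult: "qn (x \<otimes>\<^bsub>Gn n\<^esub> y) = An_add n (qn x) (qn y)"
  by (cases x; cases y) (simp add: Gn_mult qn_def)

lemma qn_one: "qn \<one>\<^bsub>Gn n\<^esub> = An_zero"
  by (simp add: Gn_one qn_def)

lemma qn_closed: "x \<in> carrier (Gn n) \<Longrightarrow> qn x \<in> An_carrier n"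
  by (auto simp: qn_def Gn_carrier_Pi_zero)

lemma qn_pow:
  assumes "x \<in> carrier (Gn n)"
  shows "qn (x [^]\<^bsub>Gn n\<^esub> k) =
    ((int k * fst (qn x)) mod 3, (\<lambda>i. if i \<in> {1..n} then (int k * snd (qn x) i) mod 9 else 0))"
proof (induction k)
  case 0
  show ?case by (simp add: qn_one An_zero_def fun_eq_iff)
next
  case (Suc k)
  interpret group "Gn n" by (rule group_Gn)
  show ?case
    by (simp add: qn_mult Suc An_add_def mod_simps algebra_simps fun_eq_iff)
qed

lemma fst_cube:
  assumes "x \<in> carrier (Gn n)"
  shows "fst (x [^]\<^bsub>Gn n\<^esub> (3::nat)) = (\<lambda>_. 0)"
proof -
  interpret group "Gn n" by (rule group_Gn)
  obtain c a where x: "x = (c, a)" by (cases x)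
  have "x [^]\<^bsub>Gn n\<^esub> (3::nat) = x \<otimes>\<^bsub>Gn n\<^esub> x \<otimes>\<^bsub>Gn n\<^esub> x"
    using assms by (simp add: numeral_3_eq_3)
  moreover have "((c i + c i + theta n a a i) mod 3 + c i + theta n (An_add n a a) a i) mod 3 = 0"
    if "i \<in> {1..n}" for i
    using mod_add_mod_add_mod[of "c i + c i + theta n a a i" 3 "c i" "theta n a a i + theta n a a i"]
    by (simp add: theta_An_add_left[OF that])
  ultimately show ?thesis
    by (simp add: x Gn_mult fun_eq_iff)
qed

lemma fst_pow_eq_zero:
  assumes "y \<in> carrier (Gn n)" "fst y = (\<lambda>_. 0)" "fst (qn y) = 0"
  shows "fst (y [^]\<^bsub>Gn n\<^esub> (k::nat)) = (\<lambda>_. 0)"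
proof (induction k)
  case 0
  show ?case by (simp add: Gn_one)
next
  case (Suc k)
  have "y [^]\<^bsub>Gn n\<^esub> Suc k = (fst (y [^]\<^bsub>Gn n\<^esub> k), qn (y [^]\<^bsub>Gn n\<^esub> k)) \<otimes>\<^bsub>Gn n\<^esub> (fst y, qn y)"
    by (simp add: qn_def)
  moreover have "fst (qn (y [^]\<^bsub>Gn n\<^esub> k)) = 0"
    using qn_pow[OF assms(1), of k] assms(3) by simp
  ultimately show ?case
    using Suc assms(2) by (simp add: Gn_mult theta_def pi0_def fun_eq_iff)
qed

text \<open>If \<open>3\<close> divides \<open>k\<close>, then \<open>g\<^sup>k\<close> is a power of \<open>g\<^sup>3\<close>, which has vanishing \<open>(\<int>/3)\<^sup>n\<close>- and
  \<open>\<int>/3\<close>-coordinates; such elements are determined by their image under \<open>q\<^sub>n\<close>.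
  Otherwise \<open>k\<close> is a unit modulo \<open>9\<close>, so \<open>k \<cdot> q\<^sub>n g = 0\<close> forces \<open>q\<^sub>n g = 0\<close>.\<close>

lemma pow_eq_one_iff_qn:
  assumes g: "g \<in> carrier (Gn n)" and "qn g \<noteq> An_zero"
  shows "g [^]\<^bsub>Gn n\<^esub> (k::nat) = \<one>\<^bsub>Gn n\<^esub> \<longleftrightarrow> qn (g [^]\<^bsub>Gn n\<^esub> k) = An_zero"
proof
  assume "qn (g [^]\<^bsub>Gn n\<^esub> k) = An_zero"
  then have k0: "(int k * fst (qn g)) mod 3 = 0" and
    ki: "\<And>i. i \<in> {1..n} \<Longrightarrow> (int k * snd (qn g) i) mod 9 = 0"
    unfolding qn_pow[OF g] by (auto simp: An_zero_def fun_eq_iff split: if_splits)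
  interpret group "Gn n" by (rule group_Gn)
  show "g [^]\<^bsub>Gn n\<^esub> k = \<one>\<^bsub>Gn n\<^esub>"
  proof (cases "3 dvd k")
    case True
    then obtain m where k: "k = 3 * m" by blast
    let ?y = "g [^]\<^bsub>Gn n\<^esub> (3::nat)"
    have "fst (qn ?y) = 0"
      by (simp add: qn_pow[OF g])
    then have "fst (?y [^]\<^bsub>Gn n\<^esub> m) = (\<lambda>_. 0)"
      using g by (intro fst_pow_eq_zero fst_cube) simp_all
    then have "fst (g [^]\<^bsub>Gn n\<^esub> k) = (\<lambda>_. 0)"
      using g by (simp add: k nat_pow_pow)
    with \<open>qn (g [^]\<^bsub>Gn n\<^esub> k) = An_zero\<close> show ?thesis
      by (simp add: Gn_one qn_def prod_eq_iff)
  next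
    case False
    then have "coprime 3 (int k)"
      by (intro prime_imp_coprime) (simp, presburger)
    then have "coprime 9 (int k)"
      using coprime_power_left_iff[of 3 2 "int k"] by simp
    obtain a0 a where qg: "qn g = (a0, a)" and a0: "a0 \<in> {0..2}" and a: "a \<in> Pi_zero {1..n} (\<lambda>_. {0..8})"
      using qn_closed[OF g] by (auto simp: An_carrier_Pi_zero)
    have "a0 mod 3 = 0"
      using k0 mult_mod_cancel_left[of "int k" a0 3 0] \<open>coprime 3 (int k)\<close> by (simp add: qg)
    then have "a0 = 0"
      using a0 by auto
    moreover have "a i = 0" for i
    proof (cases "i \<in> {1..n}")
      case True
      then have "a i mod 9 = 0"
        using ki[OF True] mult_mod_cancel_left[of "int k" "a i" 9 0] \<open>coprime 9 (int k)\<close>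
        by (simp add: qg)
      then show ?thesis using Pi_zero_mem[OF a True] by auto
    next
      case False
      then show ?thesis by (rule Pi_zero_outside[OF a])
    qed
    ultimately have "qn g = An_zero"
      by (simp add: qg An_zero_def fun_eq_iff)
    with assms(2) show ?thesis by contradiction
  qed
qed (simp add: qn_one)

lemma qn_conj:
  assumes "g \<in> carrier (Gn n)" "h \<in> carrier (Gn n)"
  shows "qn (h \<otimes>\<^bsub>Gn n\<^esub> g \<otimes>\<^bsub>Gn n\<^esub> inv\<^bsub>Gn n\<^esub> h) = qn g"
proof -
  interpret group "Gn n" by (rule group_Gn)
  have "qn (h \<otimes>\<^bsub>Gn n\<^esub> g \<otimes>\<^bsub>Gn n\<^esub> inv\<^bsub>Gn n\<^esub> h) = An_add n (qn g) (qn (h \<otimes>\<^bsub>Gn n\<^esub> inv\<^bsub>Gn n\<^esub> h))"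
    by (simp add: qn_mult An_add_assoc An_add_commute[of n "qn h"])
  also have "\<dots> = qn g"
    using assms by (simp add: qn_one An_add_commute[of n "qn g"] An_add_zero_left qn_closed)
  finally show ?thesis .
qed

lemma Gn_commute_iff:
  assumes "x \<in> carrier (Gn n)" "y \<in> carrier (Gn n)"
  shows "x \<otimes>\<^bsub>Gn n\<^esub> y = y \<otimes>\<^bsub>Gn n\<^esub> x \<longleftrightarrow> theta n (qn x) (qn y) = theta n (qn y) (qn x)"
proof -
  obtain c a d b where xy: "x = (c, a)" "y = (d, b)" by (cases x, cases y) blast
  have "x \<otimes>\<^bsub>Gn n\<^esub> y = y \<otimes>\<^bsub>Gn n\<^esub> x \<longleftrightarrow>
      (\<forall>i\<in>{1..n}. (c i + d i + theta n a b i) mod 3 = (d i + c i + theta n b a i) mod 3)"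
    by (auto simp: xy Gn_mult An_add_commute fun_eq_iff)
  also have "\<dots> \<longleftrightarrow> (\<forall>i\<in>{1..n}. theta n a b i = theta n b a i)"
    using mod_add_left_cancel[of "c i + d i" "theta n a b i" 3 "theta n b a i" for i]
    by (simp add: theta_mod add.commute)
  also have "\<dots> \<longleftrightarrow> theta n a b = theta n b a"
    by (simp add: theta_eq_iff)
  finally show ?thesis by (simp add: xy qn_def)
qed

section \<open>Conjugates that are powers\<close>

lemma (in group) int_pow_mod_ord:
  "x \<in> carrier G \<Longrightarrow> x [^] (k::int) = x [^] (k mod int (ord x))"
  by (simp add: int_pow_eq mod_eq_dvd_iff[symmetric])

lemma qn_pow_Suc_eq_imp:
  assumes g: "g \<in> carrier (Gn n)" and "qn (g [^]\<^bsub>Gn n\<^esub> Suc k) = qn g"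
  shows "qn (g [^]\<^bsub>Gn n\<^esub> k) = An_zero"
proof -
  obtain a0 a where qg: "qn g = (a0, a)" by (cases "qn g")
  have pow_eq: "(((int k + 1) * a0) mod 3,
      (\<lambda>i. if i \<in> {1..n} then ((int k + 1) * a i) mod 9 else 0)) = (a0, a)"
    using assms(2) unfolding qn_pow[OF g] qg by (simp add: add.commute cong: if_cong)
  then have "((int k + 1) * a0) mod 3 = a0"
    by simp
  moreover have "((int k + 1) * a i) mod 9 = a i" if "i \<in> {1..n}" for i
    using that fun_cong[OF pow_eq[unfolded prod.inject, THEN conjunct2], of i] by simp
  ultimately show ?thesis
    unfolding qn_pow[OF g] qg An_zero_def
    by (simp add: mult_succ_mod_eq_self_imp fun_eq_iff)
qed

lemma conj_eq_pow_imp_cong_one: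
  assumes g: "g \<in> carrier (Gn n)" and "qn g \<noteq> An_zero"
    and h: "h \<in> carrier (Gn n)" and conj: "h \<otimes>\<^bsub>Gn n\<^esub> g \<otimes>\<^bsub>Gn n\<^esub> inv\<^bsub>Gn n\<^esub> h = g [^]\<^bsub>Gn n\<^esub> \<alpha>"
  shows "\<alpha> mod int (group.ord (Gn n) g) = 1 mod int (group.ord (Gn n) g)"
proof -
  interpret group "Gn n" by (rule group_Gn)
  define d where "d = ord g"
  define k where "k = nat ((\<alpha> - 1) mod int d)"
  have d_pos: "0 < d"
    using ord_ge_1[OF finite_carrier_Gn g] by (simp add: d_def)
  then have int_k: "int k = (\<alpha> - 1) mod int d"
    by (simp add: k_def)
  have "g [^]\<^bsub>Gn n\<^esub> \<alpha> = g [^]\<^bsub>Gn n\<^esub> (int k + 1)"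
    using int_pow_mod_ord[OF g, of \<alpha>] int_pow_mod_ord[OF g, of "int k + 1"]
    by (simp add: int_k d_def mod_add_left_eq)
  also have "\<dots> = g [^]\<^bsub>Gn n\<^esub> Suc k"
    by (simp add: add.commute flip: int_pow_int)
  finally have "qn (g [^]\<^bsub>Gn n\<^esub> Suc k) = qn g"
    using qn_conj[OF g h] conj by simp
  then have "d dvd k"
    using qn_pow_Suc_eq_imp[OF g] pow_eq_one_iff_qn[OF g assms(2)] pow_eq_id[OF g]
    by (simp add: d_def)
  then have "int d dvd (\<alpha> - 1) mod int d"
    by (simp flip: int_k)
  then show ?thesis
    by (simp add: d_def dvd_mod_iff mod_eq_dvd_iff)
qed

lemma ord_eq_3_of_qn_zero:
  assumes g: "g \<in> carrier (Gn n)" and "qn g = An_zero" and "g \<noteq> \<one>\<^bsub>Gn n\<^esub>"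
  shows "group.ord (Gn n) g = 3"
proof -
  interpret group "Gn n" by (rule group_Gn)
  have "qn (g [^]\<^bsub>Gn n\<^esub> (3::nat)) = An_zero"
    using qn_pow[OF g, of 3] assms(2) by (simp add: An_zero_def fun_eq_iff)
  then have "g [^]\<^bsub>Gn n\<^esub> (3::nat) = \<one>\<^bsub>Gn n\<^esub>"
    using fst_cube[OF g] by (simp add: Gn_one qn_def prod_eq_iff)
  then have "ord g dvd 3"
    using pow_eq_id[OF g] by simp
  moreover have "ord g \<noteq> 1"
    using ord_eq_1[OF g] assms(3) by simp
  ultimately show ?thesis
    using prime_nat_iff[of 3] by auto
qed

lemma Sset_of_qn_zero:
  assumes g: "g \<in> carrier (Gn n)" and "qn g = An_zero" and "g \<noteq> \<one>\<^bsub>Gn n\<^esub>"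
  shows "Sset n g \<alpha> = (if \<alpha> mod 3 = 1 then carrier (Gn n) else {})"
proof -
  interpret group "Gn n" by (rule group_Gn)
  have "h \<otimes>\<^bsub>Gn n\<^esub> g \<otimes>\<^bsub>Gn n\<^esub> inv\<^bsub>Gn n\<^esub> h = g" if "h \<in> carrier (Gn n)" for h
    using that g Gn_commute_iff[OF that g] assms(2)
    by (simp add: inv_solve_right' theta_An_zero_left theta_An_zero_right)
  moreover have "g = g [^]\<^bsub>Gn n\<^esub> \<alpha> \<longleftrightarrow> \<alpha> mod 3 = 1"
    using int_pow_eq[OF g, of 1 \<alpha>] ord_eq_3_of_qn_zero[OF assms] g
    by (simp add: mod_eq_dvd_iff[of \<alpha> 3 1, symmetric])
  ultimately show ?thesis
    by (auto simp: Sset_def)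
qed

section \<open>Centralizers\<close>

definition theta_centralizer :: "nat \<Rightarrow> int \<times> (nat \<Rightarrow> int) \<Rightarrow> (int \<times> (nat \<Rightarrow> int)) set" where
  "theta_centralizer n x = {y \<in> An_carrier n. theta n y x = theta n x y}"

lemma Sset_one_eq:
  assumes g: "g \<in> carrier (Gn n)"
  shows "Sset n g 1 = Pi_zero {1..n} (\<lambda>_. {0..2}) \<times> theta_centralizer n (qn g)"
proof -
  interpret group "Gn n" by (rule group_Gn)
  have "Sset n g 1 = {h \<in> carrier (Gn n). h \<otimes>\<^bsub>Gn n\<^esub> g = g \<otimes>\<^bsub>Gn n\<^esub> h}"
    using g by (auto simp: Sset_def inv_solve_right')
  also have "\<dots> = {h \<in> carrier (Gn n). theta n (qn h) (qn g) = theta n (qn g) (qn h)}"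
    using Gn_commute_iff[OF _ g] by blast
  also have "\<dots> = Pi_zero {1..n} (\<lambda>_. {0..2}) \<times> theta_centralizer n (qn g)"
    by (auto simp: Gn_carrier_Pi_zero theta_centralizer_def qn_def)
  finally show ?thesis .
qed

lemma theta_centralizer_eq:
  "theta_centralizer n (x0, a) = {(y0, b). y0 \<in> {0..2} \<and> b \<in> Pi_zero {1..n} (\<lambda>_. {0..8}) \<and>
     (\<forall>i\<in>{1..n}. (y0 * a i) mod 3 = (x0 * b i) mod 3)}"
  by (auto simp: theta_centralizer_def An_carrier_Pi_zero theta_eq_iff theta_eq)

lemma card_theta_centralizer_fst_nonzero:
  assumes "x0 \<in> {1..2}"
  shows "card (theta_centralizer n (x0, a)) = 3 * 3 ^ n"
proof -
  define B where "B y0 = Pi_zero {1..n} (\<lambda>i. {z \<in> {0..8}. z mod 3 = (y0 * a i * x0) mod 3})" for y0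
  have "x0 = 1 \<or> x0 = 2"
    using assms by auto
  then have "(x0 * x0) mod 3 = 1 mod 3"
    by auto
  moreover have "b \<in> B y0 \<longleftrightarrow>
      b \<in> Pi_zero {1..n} (\<lambda>_. {0..8}) \<and> (\<forall>i\<in>{1..n}. b i mod 3 = (y0 * a i * x0) mod 3)" for y0 b
    unfolding B_def Pi_zero_Collect by simp
  ultimately have "theta_centralizer n (x0, a) = Sigma {0..2} B"
    by (auto simp: theta_centralizer_eq mod_mult_eq_iff_of_square_one)
  moreover have card_B: "card (B y0) = 3 ^ n" for y0
    using card_residue_class[of "(y0 * a i * x0) mod 3" 3 3 for i]
    by (simp add: B_def card_Pi_zero)
  moreover have "finite (B y0)" for y0
    using card_B[of y0] by (intro card_ge_0_finite) simp
  ultimately show ?thesis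
    by (simp add: card_SigmaI)
qed

lemma card_theta_centralizer_coord_nonzero:
  assumes "j \<in> {1..n}" "a j mod 3 \<noteq> 0"
  shows "card (theta_centralizer n (0, a)) = 9 ^ n"
proof -
  have "(\<forall>i\<in>{1..n}. (y0 * a i) mod 3 = 0) \<longleftrightarrow> y0 = 0" if "y0 \<in> {0..2}" for y0 :: int
  proof
    assume "\<forall>i\<in>{1..n}. (y0 * a i) mod 3 = 0"
    then have "3 dvd y0 * a j"
      using assms(1) by auto
    then have "3 dvd y0"
      using assms(2) prime_dvd_mult_iff[of "3::int" y0 "a j"] by (auto simp: dvd_eq_mod_eq_0)
    then show "y0 = 0"
      using that by auto
  qed simp
  then have "theta_centralizer n (0, a) = {0} \<times> Pi_zero {1..n} (\<lambda>_. {0..8})"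
    by (auto simp: theta_centralizer_eq)
  then show ?thesis
    by (simp add: card_cartesian_product card_Pi_zero)
qed

lemma card_theta_centralizer_coords_zero:
  assumes "\<forall>i\<in>{1..n}. a i mod 3 = 0"
  shows "card (theta_centralizer n (0, a)) = 3 * 9 ^ n"
proof -
  have "(y0 * a i) mod 3 = 0" if "i \<in> {1..n}" for y0 i
    using assms that mod_mult_right_eq[of y0 "a i" 3] by simp
  then have "theta_centralizer n (0, a) = {0..2} \<times> Pi_zero {1..n} (\<lambda>_. {0..8})"
    by (auto simp: theta_centralizer_eq)
  then show ?thesis
    by (simp add: card_cartesian_product card_Pi_zero)
qed

theorem mainTheorem7:
  fixes n :: nat and g :: gelem
  assumes "n \<ge> 1" and "g \<in> carrier (Gn n)"
  shows "(qn g = An_zero \<and> g \<noteq> \<one>\<^bsub>Gn n\<^esub> \<longrightarrow>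
            group.ord (Gn n) g = 3 \<and>
            (\<forall>\<alpha>::int. coprime \<alpha> (int (group.ord (Gn n) g)) \<longrightarrow>
               Sset n g \<alpha> = (if \<alpha> mod 3 = 1 then carrier (Gn n) else {})))
       \<and> (qn g \<noteq> An_zero \<longrightarrow>
            (\<forall>\<alpha>::int. coprime \<alpha> (int (group.ord (Gn n) g)) \<longrightarrow>
               \<alpha> mod int (group.ord (Gn n) g) \<noteq> 1 mod int (group.ord (Gn n) g) \<longrightarrow> Sset n g \<alpha> = {})
          \<and> (pi0 (qn g) \<noteq> 0 \<longrightarrow> card (Sset n g 1) = 3 * 9 ^ n)
          \<and> (pi0 (qn g) = 0 \<and> (\<exists>i\<in>{1..n}. pii i (qn g) \<noteq> 0) \<longrightarrow> card (Sset n g 1) = 27 ^ n)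
          \<and> (pi0 (qn g) = 0 \<and> (\<forall>i\<in>{1..n}. pii i (qn g) = 0) \<longrightarrow> card (Sset n g 1) = 3 * 27 ^ n))"
proof -
  obtain x0 a where qg: "qn g = (x0, a)" by (cases "qn g")
  have x0: "x0 \<in> {0..2}"
    using qn_closed[OF assms(2)] by (simp add: qg An_carrier_Pi_zero)
  have pi: "pi0 (qn g) = x0" "pii i (qn g) = a i mod 3" for i
    using x0 by (simp_all add: qg pi0_def pii_def)
  have card: "card (Sset n g 1) = 3 ^ n * card (theta_centralizer n (x0, a))"
    using Sset_one_eq[OF assms(2)] by (simp add: qg card_cartesian_product card_Pi_zero)
  have "Sset n g \<alpha> = {}"
    if "qn g \<noteq> An_zero" "\<alpha> mod int (group.ord (Gn n) g) \<noteq> 1 mod int (group.ord (Gn n) g)" for \<alpha>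
    using conj_eq_pow_imp_cong_one[OF assms(2) that(1)] that(2) by (auto simp: Sset_def)
  moreover have "card (Sset n g 1) = 3 * 9 ^ n" if "x0 \<noteq> 0"
    using card card_theta_centralizer_fst_nonzero[of x0 n a] x0 that
    by (simp add: power_mult_distrib[symmetric])
  moreover have "card (Sset n g 1) = 27 ^ n" if "x0 = 0" "j \<in> {1..n}" "a j mod 3 \<noteq> 0" for j
    using card card_theta_centralizer_coord_nonzero[of j n a] that
    by (simp add: power_mult_distrib[symmetric])
  moreover have "card (Sset n g 1) = 3 * 27 ^ n" if "x0 = 0" "\<forall>i\<in>{1..n}. a i mod 3 = 0"
    using card card_theta_centralizer_coords_zero[OF that(2)] that(1)
    by (simp add: power_mult_distrib[symmetric])
  ultimately show ?thesis
    using ord_eq_3_of_qn_zero[OF assms(2)] Sset_of_qn_zero[OF assms(2)] by (auto simp: pi)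
qed

end
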